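(* Let $n \ge 3$ and let $(G,c)$ be a metric TSP instance with $n$ cities. Then every 2-optimal tour $T'$ in $G$ satisfies $$c(T') \le \sqrt{\tfrac{n}{2}}\; c(T^* ),$$ where $T^*$ is a shortest tour in $G$. Moreover, this bound is tight: for every positive integer $k$, with $n = 2k^2$, there exist a metric TSP instance with $n$ cities and a 2-optimal tour $T'$ in it such that $c(T') = \sqrt{n/2}\; c(T^* )$ and $c(T^* )>0$.
   Context: A metric TSP instance with $n$ cities consists of a complete undirected graph $G$ on $n$ vertices together with a distance function $c: E(G)\to\mathbb{R}_{\ge 0}$ satisfying the triangle inequality $c(x,y)+c(y,z)\ge c(x,z)$ for all vertices $x,y,z$ (we write $c(x,y)$ for $c(\{x,y\})$, and $c(x,x)=0$). A tour is a cycle in $G$ containing all vertices; its length is $c(T)=\sum_{e\in E(T)}c(e)$, and a shortest tour is a tour of minimum length. Tours are regarded as oriented cycles (each vertex has exactly one incoming and one outgoing edge). For two edges $(a,b)$ and $(x,y)$ of an oriented tour $T$, the 2-change replaces them by $(a,x)$ and $(b,y)$ (reversing the segment from $b$ to $x$), which yields a tour again; it is improving if $c(a,x)+c(b,y) < c(a,b)+c(x,y)$. A tour is 2-optimal if it admits no improving 2-change, i.e. $c(a,x)+c(b,y)\ge c(a,b)+c(x,y)$ for all pairs of edges $(a,b),(x,y)$ of the oriented tour. *)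

theory Defs
  imports Complex_Main
begin

definition metric_tsp :: "nat \<Rightarrow> (nat \<Rightarrow> nat \<Rightarrow> real) \<Rightarrow> bool" where
  "metric_tsp n c \<longleftrightarrow>
     (\<forall>x<n. \<forall>y<n. c x y \<ge> 0) \<and>
     (\<forall>x<n. \<forall>y<n. c x y = c y x) \<and>
     (\<forall>x<n. c x x = 0) \<and>
     (\<forall>x<n. \<forall>y<n. \<forall>z<n. c x y + c y z \<ge> c x z)"

text \<open>An oriented tour is given by the cyclic sequence of its vertices: the list
  T visits every city exactly once, with edges (T!i, T!((i+1) mod n)).\<close>

definition is_tour :: "nat \<Rightarrow> nat list \<Rightarrow> bool" where
  "is_tour n T \<longleftrightarrow> length T = n \<and> distinct T \<and> set T = {0..<n}"

definition tour_length :: "nat \<Rightarrow> (nat \<Rightarrow> nat \<Rightarrow> real) \<Rightarrow> nat list \<Rightarrow> real" where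
  "tour_length n c T = (\<Sum>i<n. c (T ! i) (T ! ((i + 1) mod n)))"

definition shortest_tour :: "nat \<Rightarrow> (nat \<Rightarrow> nat \<Rightarrow> real) \<Rightarrow> nat list \<Rightarrow> bool" where
  "shortest_tour n c T \<longleftrightarrow> is_tour n T \<and>
     (\<forall>T'. is_tour n T' \<longrightarrow> tour_length n c T \<le> tour_length n c T')"

definition two_optimal :: "nat \<Rightarrow> (nat \<Rightarrow> nat \<Rightarrow> real) \<Rightarrow> nat list \<Rightarrow> bool" where
  "two_optimal n c T \<longleftrightarrow> is_tour n T \<and>
     (\<forall>i<n. \<forall>j<n. i \<noteq> j \<longrightarrow>
        (let a = T ! i; b = T ! ((i + 1) mod n); x = T ! j; y = T ! ((j + 1) mod n)
         in c a x + c b y \<ge> c a b + c x y))"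

end

theory Submission
  imports Defs "HOL-Analysis.Henstock_Kurzweil_Integration" "HOL-Number_Theory.Cong"
begin

text \<open>Cut a tour \<open>T\<close> open and lay it on a circle of circumference \<open>L = c(T)\<close>; by the triangle
  inequality the distance of two cities is at most the circle distance of their positions. An edge
  \<open>(a, b)\<close> of a 2-optimal tour \<open>T'\<close> becomes the point \<open>(pos a, pos b)\<close> of the torus of side \<open>L\<close>,
  and 2-optimality says that the \<open>\<ell>\<^sub>1\<close>-balls of radius \<open>c(a, b)\<close> around these \<open>n\<close> points are pairwise
  disjoint. Each has area \<open>2 c(a, b)\<^sup>2\<close>, so the squared edge lengths of \<open>T'\<close> sum to at most \<open>L\<^sup>2 / 2\<close>,
  and Cauchy-Schwarz gives \<open>c(T') \<le> \<surd>(n/2) L\<close>.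

  For tightness put \<open>k\<close> cities at every vertex of \<open>K\<^sub>k\<^sub>,\<^sub>k\<close> with its path metric (distances 0, 1, 2).
  A tour through all \<open>2k\<^sup>2\<close> oriented edges of \<open>K\<^sub>k\<^sub>,\<^sub>k\<close> has length \<open>2k\<^sup>2\<close> and is 2-optimal, because
  two of its edges leaving the same side never share both endpoints; the tour visiting the vertices
  one after the other has length \<open>2k\<close>, and the bound itself shows that no tour is shorter.\<close>

definition circ_dist :: "real \<Rightarrow> real \<Rightarrow> real \<Rightarrow> real" where
  "circ_dist L p q = min \<bar>p - q\<bar> (L - \<bar>p - q\<bar>)"

lemma circ_dist_commute: "circ_dist L p q = circ_dist L q p"
  unfolding circ_dist_def by (simp add: abs_minus_commute)

lemma circ_dist_le_abs: "circ_dist L p q \<le> \<bar>p - q\<bar>"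
  unfolding circ_dist_def by simp

lemma circ_dist_le_complement: "circ_dist L p q \<le> L - \<bar>p - q\<bar>"
  unfolding circ_dist_def by simp

lemma circ_dist_le_half: "circ_dist L p q \<le> L / 2"
  unfolding circ_dist_def min_def by auto

lemma circ_dist_nonneg: "p \<in> {0..L} \<Longrightarrow> q \<in> {0..L} \<Longrightarrow> 0 \<le> circ_dist L p q"
  unfolding circ_dist_def by (auto simp: min_def abs_if)

lemma circ_dist_triangle:
  "p \<in> {0..L} \<Longrightarrow> q \<in> {0..L} \<Longrightarrow> w \<in> {0..L} \<Longrightarrow> circ_dist L p w \<le> circ_dist L p q + circ_dist L q w"
  unfolding circ_dist_def by (auto simp: min_def abs_if)

definition tent :: "real \<Rightarrow> real \<Rightarrow> real" where
  "tent r u = max 0 (r - \<bar>u\<bar>)"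

definition tent_primitive :: "real \<Rightarrow> real \<Rightarrow> real" where
  "tent_primitive r u = (let v = max (-r) (min r u) in r * v - v * \<bar>v\<bar> / 2 + r\<^sup>2 / 2)"

lemma tent_primitive_below: "r \<ge> 0 \<Longrightarrow> u \<le> -r \<Longrightarrow> tent_primitive r u = 0"
  by (auto simp: tent_primitive_def Let_def power2_eq_square max_def min_def)

lemma tent_primitive_above: "r \<ge> 0 \<Longrightarrow> u \<ge> r \<Longrightarrow> tent_primitive r u = r\<^sup>2"
  by (auto simp: tent_primitive_def Let_def power2_eq_square max_def min_def)

lemma continuous_on_tent_primitive: "continuous_on S (\<lambda>x. tent_primitive r (x + d))"
  unfolding tent_primitive_def Let_def by (intro continuous_intros) auto

lemma tent_primitive_has_derivative:
  assumes "r \<ge> 0" "u \<notin> {-r, 0, r}"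
  shows "(tent_primitive r has_real_derivative tent r u) (at u)"
proof -
  consider "u < -r" | "-r < u \<and> u < 0" | "0 < u \<and> u < r" | "r < u" using assms by force
  then show ?thesis
  proof cases
    case 1
    have e: "tent r u = 0" using 1 by (simp add: tent_def)
    have "((\<lambda>x. 0) has_real_derivative 0) (at u)" by simp
    then show ?thesis unfolding e
      by (rule has_field_derivative_transform_within_open[where S="{..<-r}"])
        (use 1 assms in \<open>auto simp: tent_def tent_primitive_def power2_eq_square\<close>)
  next
    case 2
    have e: "tent r u = r + u" using 2 by (simp add: tent_def)
    have "((\<lambda>x. r*x + x*x/2 + r\<^sup>2/2) has_real_derivative (r + u)) (at u)"
      by (auto intro!: derivative_eq_intros simp: algebra_simps)
    then show ?thesis unfolding e
      by (rule has_field_derivative_transform_within_open[where S="{-r<..<0}"])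
        (use 2 in \<open>auto simp: tent_def tent_primitive_def\<close>)
  next
    case 3
    have e: "tent r u = r - u" using 3 by (simp add: tent_def)
    have "((\<lambda>x. r*x - x*x/2 + r\<^sup>2/2) has_real_derivative (r - u)) (at u)"
      by (auto intro!: derivative_eq_intros simp: algebra_simps)
    then show ?thesis unfolding e
      by (rule has_field_derivative_transform_within_open[where S="{0<..<r}"])
        (use 3 in \<open>auto simp: tent_def tent_primitive_def\<close>)
  next
    case 4
    have e: "tent r u = 0" using 4 assms by (simp add: tent_def)
    have "((\<lambda>x. r\<^sup>2) has_real_derivative 0) (at u)" by simp
    then show ?thesis unfolding e
      by (rule has_field_derivative_transform_within_open[where S="{r<..}"])
        (use 4 assms in \<open>auto simp: tent_def tent_primitive_def power2_eq_square Let_def max_def\<close>)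
  qed
qed

lemma tent_has_integral:
  assumes "r \<ge> 0" "a \<le> b"
  shows "((\<lambda>x. tent r (x + d)) has_integral
           (tent_primitive r (b + d) - tent_primitive r (a + d))) {a..b}"
proof (rule fundamental_theorem_of_calculus_interior_strong[where S="{-r-d, -d, r-d}"])
  fix x assume x: "x \<in> {a<..<b} - {-r-d, -d, r-d}"
  have "(tent_primitive r has_real_derivative tent r (x + d)) (at (x + d))"
    using x assms by (intro tent_primitive_has_derivative) auto
  then have "((\<lambda>x. tent_primitive r (x + d)) has_real_derivative tent r (x + d)) (at x)"
    by (simp add: DERIV_shift)
  then show "((\<lambda>x. tent_primitive r (x + d)) has_vector_derivative tent r (x + d)) (at x)"
    by (simp add: has_real_derivative_iff_has_vector_derivative)
qed (use assms continuous_on_tent_primitive in auto)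

text \<open>On \<open>[0, L]\<close> the circular tent around \<open>c\<close> is the sum of the tents around
  \<open>c - L\<close>, \<open>c\<close> and \<open>c + L\<close>, and the three integrals telescope.\<close>

lemma circ_tent_has_integral:
  assumes "c \<in> {0..L}" "0 \<le> r" "r \<le> L / 2"
  shows "((\<lambda>x. max 0 (r - circ_dist L x c)) has_integral r\<^sup>2) {0..L}"
proof -
  let ?P = "tent_primitive r"
  have "((\<lambda>x. tent r (x + -c) + tent r (x + (L - c)) + tent r (x + (-c - L))) has_integral
        (?P (L + -c) - ?P (0 + -c)) + (?P (L + (L - c)) - ?P (0 + (L - c)))
        + (?P (L + (-c - L)) - ?P (0 + (-c - L)))) {0..L}"
    using assms by (intro has_integral_add tent_has_integral) auto
  also have "(?P (L + -c) - ?P (0 + -c)) + (?P (L + (L - c)) - ?P (0 + (L - c)))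
        + (?P (L + (-c - L)) - ?P (0 + (-c - L))) = r\<^sup>2"
    using assms by (simp add: tent_primitive_above tent_primitive_below)
  finally show ?thesis
    by (rule has_integral_eq[rotated])
      (use assms in \<open>auto simp: tent_def circ_dist_def max_def min_def abs_if\<close>)
qed

lemma interval_packing_on_line:
  fixes y s :: "'i \<Rightarrow> real"
  assumes "finite J" "J \<noteq> {}"
    and "\<forall>i\<in>J. \<forall>j\<in>J. i \<noteq> j \<and> y i \<le> y j \<longrightarrow> s i + s j \<le> y j - y i"
  shows "\<exists>a\<in>J. \<exists>b\<in>J. (\<forall>j\<in>J. y a \<le> y j \<and> y j \<le> y b) \<and>
           (\<Sum>i\<in>J. 2 * s i) \<le> y b - y a + s a + s b"
  using assms
proof (induction J rule: finite_psubset_induct)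
  case (psubset J)
  obtain b where b: "b \<in> J" "y b = Max (y ` J)"
    using psubset.prems(1) psubset.hyps Max_in[of "y ` J"] by fastforce
  then have b_max: "\<forall>j\<in>J. y j \<le> y b" using psubset.hyps by simp
  show ?case
  proof (cases "J = {b}")
    case False
    let ?J = "J - {b}"
    obtain a b' where ab': "a \<in> ?J" "b' \<in> ?J" "\<forall>j\<in>?J. y a \<le> y j \<and> y j \<le> y b'"
        "(\<Sum>i\<in>?J. 2 * s i) \<le> y b' - y a + s a + s b'"
      using psubset.IH[of ?J] psubset.prems False b(1) by blast
    have "s b' + s b \<le> y b - y b'"
      using psubset.prems(2) ab'(2) b b_max by blast
    moreover have "(\<Sum>i\<in>J. 2 * s i) = 2 * s b + (\<Sum>i\<in>?J. 2 * s i)"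
      using b psubset.hyps by (simp add: sum.remove)
    ultimately show ?thesis
      using ab' b b_max by (intro bexI[of _ a] bexI[of _ b]) auto
  qed auto
qed

lemma arc_packing_on_circle:
  fixes y s :: "'i \<Rightarrow> real"
  assumes "finite J" "0 \<le> L" "\<forall>i\<in>J. y i \<in> {0..L} \<and> s i \<le> L / 2"
    and "\<forall>i\<in>J. \<forall>j\<in>J. i \<noteq> j \<longrightarrow> s i + s j \<le> circ_dist L (y i) (y j)"
  shows "(\<Sum>i\<in>J. 2 * s i) \<le> L"
proof (cases "J = {}")
  case True
  with assms(2) show ?thesis by simp
next
  case False
  have "\<forall>i\<in>J. \<forall>j\<in>J. i \<noteq> j \<and> y i \<le> y j \<longrightarrow> s i + s j \<le> y j - y i"
    using assms(4) circ_dist_le_abs by (smt (verit))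
  from interval_packing_on_line[OF assms(1) False this]
  obtain a b where ab: "a \<in> J" "b \<in> J" "\<forall>j\<in>J. y a \<le> y j \<and> y j \<le> y b"
      "(\<Sum>i\<in>J. 2 * s i) \<le> y b - y a + s a + s b"
    by blast
  show ?thesis
  proof (cases "a = b")
    case True
    then show ?thesis using ab assms(3) by fastforce
  next
    case False
    have "s a + s b \<le> L - \<bar>y a - y b\<bar>"
      using assms(4) ab False circ_dist_le_complement order_trans by blast
    then show ?thesis using ab by (auto simp: abs_if split: if_splits)
  qed
qed

text \<open>Slicing the torus \<open>[0, L)\<^sup>2\<close> at height \<open>z\<close> cuts the ball of radius \<open>r i\<close> around
  \<open>(x i, y i)\<close> in an arc of half-length \<open>r i - circ_dist L z (x i)\<close>; these arcs are disjoint,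
  and integrating over \<open>z\<close> turns their total length into the total area \<open>\<Sum> 2 (r i)\<^sup>2\<close>.\<close>

lemma l1_ball_packing_on_torus:
  fixes x y r :: "'i \<Rightarrow> real"
  assumes "finite I" "0 \<le> L"
    and range: "\<forall>i\<in>I. x i \<in> {0..L} \<and> y i \<in> {0..L} \<and> 0 \<le> r i \<and> r i \<le> L / 2"
    and disjoint: "\<forall>i\<in>I. \<forall>j\<in>I. i \<noteq> j \<longrightarrow>
                     r i + r j \<le> circ_dist L (x i) (x j) + circ_dist L (y i) (y j)"
  shows "(\<Sum>i\<in>I. 2 * (r i)\<^sup>2) \<le> L\<^sup>2"
proof -
  have slice: "(\<Sum>i\<in>I. 2 * max 0 (r i - circ_dist L z (x i))) \<le> L" if z: "z \<in> {0..L}" for z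
  proof -
    define s where "s i = r i - circ_dist L z (x i)" for i
    define J where "J = {i\<in>I. s i > 0}"
    have "(\<Sum>i\<in>I. 2 * max 0 (r i - circ_dist L z (x i))) = (\<Sum>i\<in>J. 2 * s i)"
      by (rule sum.mono_neutral_cong_right) (use assms(1) in \<open>auto simp: J_def s_def\<close>)
    also have "\<dots> \<le> L"
    proof (rule arc_packing_on_circle)
      show "\<forall>i\<in>J. y i \<in> {0..L} \<and> s i \<le> L / 2"
        using range z circ_dist_nonneg by (fastforce simp: J_def s_def)
      show "\<forall>i\<in>J. \<forall>j\<in>J. i \<noteq> j \<longrightarrow> s i + s j \<le> circ_dist L (y i) (y j)"
      proof (intro ballI impI)
        fix i j assume ij: "i \<in> J" "j \<in> J" "i \<noteq> j"
        have "circ_dist L (x i) (x j) \<le> circ_dist L (x i) z + circ_dist L z (x j)"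
          using ij range z by (intro circ_dist_triangle) (auto simp: J_def)
        then show "s i + s j \<le> circ_dist L (y i) (y j)"
          using disjoint ij circ_dist_commute[of L z "x i"] by (force simp: J_def s_def)
      qed
    qed (use assms in \<open>auto simp: J_def\<close>)
    finally show ?thesis .
  qed
  have "((\<lambda>z. \<Sum>i\<in>I. 2 * max 0 (r i - circ_dist L z (x i))) has_integral (\<Sum>i\<in>I. 2 * (r i)\<^sup>2)) {0..L}"
    using range by (intro has_integral_sum assms(1) has_integral_mult_right circ_tent_has_integral) auto
  from has_integral_le[OF this has_integral_const_real slice]
  show ?thesis using assms(2) by (simp add: power2_eq_square)
qed

lemma tour_nth_less: "is_tour n T \<Longrightarrow> i < n \<Longrightarrow> T ! i < n"
  unfolding is_tour_def using nth_mem by fastforce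

definition tour_position :: "nat \<Rightarrow> (nat \<Rightarrow> nat \<Rightarrow> real) \<Rightarrow> nat list \<Rightarrow> nat \<Rightarrow> real" where
  "tour_position n c T m = (\<Sum>t<m. c (T ! t) (T ! ((t + 1) mod n)))"

lemma tour_position_mono:
  assumes "metric_tsp n c" "is_tour n T" "m \<le> m'" "m' \<le> n"
  shows "tour_position n c T m \<le> tour_position n c T m'"
  unfolding tour_position_def
proof (rule sum_mono2)
  fix t assume "t \<in> {..<m'} - {..<m}"
  then have "T ! t < n" "T ! ((t + 1) mod n) < n"
    using assms tour_nth_less[OF assms(2)] by auto
  then show "0 \<le> c (T ! t) (T ! ((t + 1) mod n))"
    using assms(1) unfolding metric_tsp_def by blast
qed (use assms in auto)

lemma tour_position_n: "tour_position n c T n = tour_length n c T"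
  unfolding tour_position_def tour_length_def by simp

lemma tour_position_bounds:
  assumes "metric_tsp n c" "is_tour n T" "m \<le> n"
  shows "tour_position n c T m \<in> {0..tour_length n c T}"
  using tour_position_mono[OF assms(1,2), of 0 m] tour_position_mono[OF assms(1,2), of m n] assms(3)
  by (simp add: tour_position_n tour_position_def)

lemma cost_le_tour_position_diff:
  assumes "metric_tsp n c" "is_tour n T" "m < n" "m \<le> m'" "m' \<le> n"
  shows "c (T ! m) (T ! (m' mod n)) \<le> tour_position n c T m' - tour_position n c T m"
  using assms(4,5)
proof (induction m' rule: dec_induct)
  case base
  have "T ! m < n" using tour_nth_less assms by blast
  then show ?case using assms(1,3) unfolding metric_tsp_def by simp
next
  case (step k)
  have "T ! m < n" "T ! k < n" "T ! (Suc k mod n) < n"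
    using tour_nth_less[OF assms(2)] assms step by auto
  then have "c (T ! m) (T ! (Suc k mod n)) \<le> c (T ! m) (T ! k) + c (T ! k) (T ! (Suc k mod n))"
    using assms(1) unfolding metric_tsp_def by blast
  also have "c (T ! m) (T ! k) \<le> tour_position n c T k - tour_position n c T m"
    using step by simp
  finally show ?case by (simp add: tour_position_def)
qed

lemma cost_le_circ_dist_tour_position:
  assumes "metric_tsp n c" "is_tour n T" "m < n" "m' < n"
  shows "c (T ! m) (T ! m') \<le>
           circ_dist (tour_length n c T) (tour_position n c T m) (tour_position n c T m')"
proof -
  let ?p = "tour_position n c T" and ?L = "tour_length n c T"
  have both_ways: "c (T ! a) (T ! b) \<le> ?p b - ?p a \<and> c (T ! a) (T ! b) \<le> ?L - (?p b - ?p a)"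
    if ab: "a \<le> b" "b < n" for a b
  proof
    show "c (T ! a) (T ! b) \<le> ?p b - ?p a"
      using cost_le_tour_position_diff[OF assms(1,2), of a b] ab by simp
    have lt: "T ! a < n" "T ! b < n" "T ! 0 < n" using tour_nth_less[OF assms(2)] ab by auto
    then have "c (T ! a) (T ! b) = c (T ! b) (T ! a)"
      using assms(1) unfolding metric_tsp_def by blast
    also have "\<dots> \<le> c (T ! b) (T ! 0) + c (T ! 0) (T ! a)"
      using assms(1) lt unfolding metric_tsp_def by blast
    also have "c (T ! b) (T ! 0) \<le> ?p n - ?p b"
      using cost_le_tour_position_diff[OF assms(1,2), of b n] ab by simp
    also have "c (T ! 0) (T ! a) \<le> ?p a - ?p 0"
      using cost_le_tour_position_diff[OF assms(1,2), of 0 a] ab by simp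
    finally show "c (T ! a) (T ! b) \<le> ?L - (?p b - ?p a)"
      by (simp add: tour_position_n tour_position_def)
  qed
  have sym: "c (T ! m) (T ! m') = c (T ! m') (T ! m)"
    using assms tour_nth_less[OF assms(2)] unfolding metric_tsp_def by auto
  show ?thesis
  proof (cases "m \<le> m'")
    case True
    then show ?thesis
      using both_ways[OF True assms(4)] tour_position_mono[OF assms(1,2) True] assms
      unfolding circ_dist_def by (auto simp: abs_if min_def)
  next
    case False
    then show ?thesis
      using both_ways[of m' m] tour_position_mono[OF assms(1,2), of m' m] assms sym
      unfolding circ_dist_def by (auto simp: abs_if min_def)
  qed
qed

lemma tour_embeds_in_circle:
  assumes "metric_tsp n c" "is_tour n T"
  obtains pos where "\<forall>v<n. pos v \<in> {0..tour_length n c T}"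
    and "\<forall>u<n. \<forall>v<n. c u v \<le> circ_dist (tour_length n c T) (pos u) (pos v)"
proof -
  have "\<forall>v<n. \<exists>m<n. T ! m = v"
    using assms(2) unfolding is_tour_def by (metis atLeastLessThan_iff in_set_conv_nth zero_le)
  then obtain idx where idx: "\<forall>v<n. idx v < n \<and> T ! idx v = v" by metis
  show thesis
  proof
    show "\<forall>v<n. tour_position n c T (idx v) \<in> {0..tour_length n c T}"
      using idx tour_position_bounds[OF assms] by (simp add: less_imp_le)
    show "\<forall>u<n. \<forall>v<n. c u v \<le> circ_dist (tour_length n c T)
                             (tour_position n c T (idx u)) (tour_position n c T (idx v))"
      using idx cost_le_circ_dist_tour_position[OF assms] by metis
  qed
qed

lemma sum_le_sqrt_half_card_mult:
  fixes l :: "nat \<Rightarrow> real"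
  assumes "(\<Sum>i<n. 2 * (l i)\<^sup>2) \<le> L\<^sup>2" "0 \<le> L"
  shows "(\<Sum>i<n. l i) \<le> sqrt (real n / 2) * L"
proof -
  have "(\<Sum>i<n. l i)\<^sup>2 \<le> (\<Sum>i<n. (l i)\<^sup>2) * real n"
    using sum_squared_le_sum_of_squares[of l "{..<n}"] by simp
  also have "\<dots> \<le> (L\<^sup>2 / 2) * real n"
    using assms(1) by (intro mult_right_mono) (auto simp: sum_distrib_left[symmetric])
  finally have "(\<Sum>i<n. l i)\<^sup>2 \<le> (real n / 2) * L\<^sup>2" by (simp add: mult.commute)
  then have "(\<Sum>i<n. l i) \<le> sqrt ((real n / 2) * L\<^sup>2)" by (rule real_le_rsqrt)
  also have "\<dots> = sqrt (real n / 2) * L"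
    using assms(2) by (simp only: real_sqrt_mult real_sqrt_abs abs_of_nonneg)
  finally show ?thesis .
qed

lemma two_optimal_tour_length_le:
  assumes "metric_tsp n c" "two_optimal n c T'" "is_tour n T"
  shows "tour_length n c T' \<le> sqrt (real n / 2) * tour_length n c T"
proof -
  let ?L = "tour_length n c T"
  obtain pos where pos: "\<forall>v<n. pos v \<in> {0..?L}"
    and cost_le: "\<forall>u<n. \<forall>v<n. c u v \<le> circ_dist ?L (pos u) (pos v)"
    using tour_embeds_in_circle[OF assms(1,3)] by blast
  have "0 \<le> ?L"
    using tour_position_bounds[OF assms(1,3), of 0] by simp
  define a where "a i = T' ! i" for i
  define b where "b i = T' ! ((i + 1) mod n)" for i
  have ab: "a i < n \<and> b i < n" if "i < n" for i
    using assms(2) that tour_nth_less unfolding two_optimal_def a_def b_def by auto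
  have "(\<Sum>i<n. 2 * (c (a i) (b i))\<^sup>2) \<le> ?L\<^sup>2"
  proof (rule l1_ball_packing_on_torus[where x="\<lambda>i. pos (a i)" and y="\<lambda>i. pos (b i)"])
    show "\<forall>i\<in>{..<n}. pos (a i) \<in> {0..?L} \<and> pos (b i) \<in> {0..?L} \<and>
            0 \<le> c (a i) (b i) \<and> c (a i) (b i) \<le> ?L / 2"
      using pos cost_le ab assms(1) circ_dist_le_half order_trans
      unfolding metric_tsp_def by (metis lessThan_iff)
    show "\<forall>i\<in>{..<n}. \<forall>j\<in>{..<n}. i \<noteq> j \<longrightarrow> c (a i) (b i) + c (a j) (b j) \<le>
            circ_dist ?L (pos (a i)) (pos (a j)) + circ_dist ?L (pos (b i)) (pos (b j))"
    proof (intro ballI impI)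
      fix i j assume ij: "i \<in> {..<n}" "j \<in> {..<n}" "i \<noteq> j"
      then have "c (a i) (b i) + c (a j) (b j) \<le> c (a i) (a j) + c (b i) (b j)"
        using assms(2) unfolding two_optimal_def a_def b_def Let_def by auto
      also have "\<dots> \<le> circ_dist ?L (pos (a i)) (pos (a j)) + circ_dist ?L (pos (b i)) (pos (b j))"
        using cost_le ab ij by (simp add: add_mono)
      finally show "c (a i) (b i) + c (a j) (b j) \<le>
          circ_dist ?L (pos (a i)) (pos (a j)) + circ_dist ?L (pos (b i)) (pos (b j))" .
    qed
  qed (use \<open>0 \<le> ?L\<close> in auto)
  from sum_le_sqrt_half_card_mult[OF this \<open>0 \<le> ?L\<close>]
  show ?thesis unfolding tour_length_def a_def b_def .
qed

definition bipartite_dist :: "nat \<Rightarrow> nat \<Rightarrow> real" where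
  "bipartite_dist u v = (if u = v then 0 else if u mod 2 \<noteq> v mod 2 then 1 else 2)"

text \<open>The cities \<open>2 s\<close> and \<open>2 s + 1\<close> are put on the vertices \<open>s mod k\<close> and
  \<open>(s div k + s mod k) mod k\<close> of the two sides of \<open>K\<^sub>k\<^sub>,\<^sub>k\<close> (even and odd classes), so that the
  tour \<open>0, 1, \<dots>, 2k\<^sup>2 - 1\<close> runs through every oriented edge of \<open>K\<^sub>k\<^sub>,\<^sub>k\<close> exactly once.\<close>

definition kk_class :: "nat \<Rightarrow> nat \<Rightarrow> nat" where
  "kk_class k t = (if even t then 2 * (t div 2 mod k)
                   else 2 * ((t div 2 div k + t div 2 mod k) mod k) + 1)"

definition kk_cost :: "nat \<Rightarrow> nat \<Rightarrow> nat \<Rightarrow> real" where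
  "kk_cost k x y = bipartite_dist (kk_class k x) (kk_class k y)"

lemma metric_tsp_kk_cost: "metric_tsp n (kk_cost k)"
  unfolding metric_tsp_def kk_cost_def bipartite_dist_def by auto

lemma bipartite_dist_other_side: "u mod 2 \<noteq> v mod 2 \<Longrightarrow> bipartite_dist u v = 1"
  unfolding bipartite_dist_def by auto

lemma bipartite_dist_same_side: "u mod 2 = v mod 2 \<Longrightarrow> u \<noteq> v \<Longrightarrow> bipartite_dist u v = 2"
  unfolding bipartite_dist_def by auto

lemma kk_class_mod_2: "kk_class k t mod 2 = t mod 2"
  unfolding kk_class_def by (auto simp: odd_iff_mod_2_eq_one)

lemma kk_class_double: "kk_class k (2 * s) = 2 * (s mod k)"
  unfolding kk_class_def by simp

lemma kk_class_double_Suc: "kk_class k (Suc (2 * s)) = 2 * ((s div k + s mod k) mod k) + 1"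
  unfolding kk_class_def by simp

lemma Suc_mod_even_parity:
  fixes i n :: nat
  assumes "even n" "i < n"
  shows "(i + 1) mod n mod 2 \<noteq> i mod 2"
proof (cases "i + 1 < n")
  case False
  then have "i + 1 = n" using assms by simp
  then show ?thesis using assms(1) by (auto simp: odd_iff_mod_2_eq_one)
qed (simp add: mod_Suc)

lemma kk_cost_Suc_mod:
  assumes "even n" "i < n"
  shows "kk_cost k i (Suc i mod n) = 1"
proof -
  have "kk_class k i mod 2 \<noteq> kk_class k (Suc i mod n) mod 2"
    using Suc_mod_even_parity[OF assms] by (simp add: kk_class_mod_2)
  then show ?thesis unfolding kk_cost_def by (rule bipartite_dist_other_side)
qed

lemma div_mod_shear_inj:
  fixes s s' k :: nat
  assumes "s < k * k" "s' < k * k" "s mod k = s' mod k"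
    and "(s div k + s mod k) mod k = (s' div k + s' mod k) mod k"
  shows "s = s'"
proof -
  have "(s div k + s mod k) mod k = (s' div k + s mod k) mod k"
    using assms(3,4) by simp
  then have "s div k mod k = s' div k mod k"
    using cong_add_rcancel_nat unfolding cong_def by blast
  then have "s div k = s' div k"
    using less_mult_imp_div_less[OF assms(1)] less_mult_imp_div_less[OF assms(2)] by simp
  then show ?thesis using assms(3) by (metis div_mult_mod_eq)
qed

lemma kk_class_edge_inj:
  fixes k i j :: nat
  assumes "i < 2 * k * k" "j < 2 * k * k" "i mod 2 = j mod 2"
    and "kk_class k i = kk_class k j"
    and "kk_class k ((i + 1) mod (2 * k * k)) = kk_class k ((j + 1) mod (2 * k * k))"
  shows "i = j"
proof (cases "even i")
  case True
  then obtain s s' where s: "i = 2 * s" "j = 2 * s'"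
    using assms(3) by (metis evenE even_iff_mod_2_eq_zero)
  then have "s < k * k" "s' < k * k" "(i + 1) mod (2 * k * k) = 2 * s + 1"
    "(j + 1) mod (2 * k * k) = 2 * s' + 1" using assms(1,2) by auto
  then show ?thesis
    using assms(4,5) s div_mod_shear_inj[of s k s'] by (simp add: kk_class_double kk_class_double_Suc)
next
  case False
  then obtain s s' where s: "i = 2 * s + 1" "j = 2 * s' + 1"
    using assms(3) by (metis oddE even_iff_mod_2_eq_zero)
  then have bound: "s < k * k" "s' < k * k" using assms(1,2) by auto
  have wrap: "kk_class k ((2 * t + 1 + 1) mod (2 * k * k)) = 2 * ((t + 1) mod k)" for t
  proof -
    have "(2 * t + 1 + 1) mod (2 * k * k) = 2 * ((t + 1) mod (k * k))"
      using mod_mult_mult1[of 2 "t + 1" "k * k"] by (simp add: mult.assoc)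
    then show ?thesis by (simp add: kk_class_double mod_mod_cancel)
  qed
  have "(s + 1) mod k = (s' + 1) mod k"
    using assms(5) unfolding s wrap by simp
  then have "s mod k = s' mod k"
    using cong_add_rcancel_nat unfolding cong_def by blast
  then show ?thesis
    using assms(4) unfolding s using bound div_mod_shear_inj[of s k s'] by (simp add: kk_class_double_Suc)
qed

lemma two_optimal_kk_upt:
  assumes "n = 2 * k * k"
  shows "two_optimal n (kk_cost k) [0..<n]"
  unfolding two_optimal_def is_tour_def
proof (intro conjI allI impI)
  fix i j assume ij: "i < n" "j < n" "i \<noteq> j"
  let ?i' = "(i + 1) mod n" and ?j' = "(j + 1) mod n"
  have n: "even n" "0 < k" using assms ij by (auto intro: gr0I)
  have edges: "kk_cost k i ?i' = 1" "kk_cost k j ?j' = 1"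
    using kk_cost_Suc_mod[OF n(1)] ij by auto
  have parity: "?i' mod 2 \<noteq> i mod 2" "?j' mod 2 \<noteq> j mod 2"
    using Suc_mod_even_parity[OF n(1)] ij by auto
  have "kk_cost k i ?i' + kk_cost k j ?j' \<le> kk_cost k i j + kk_cost k ?i' ?j'"
  proof (cases "i mod 2 = j mod 2")
    case True
    then have "kk_class k i \<noteq> kk_class k j \<or> kk_class k ?i' \<noteq> kk_class k ?j'"
      using kk_class_edge_inj[of i k j] ij assms by auto
    then have "kk_cost k i j = 2 \<or> kk_cost k ?i' ?j' = 2"
      using True parity unfolding kk_cost_def
      by (auto intro!: bipartite_dist_same_side simp: kk_class_mod_2)
    then show ?thesis
      using edges metric_tsp_kk_cost[of n k] ij n unfolding metric_tsp_def by force
  next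
    case False
    then have "kk_cost k i j = 1" "kk_cost k ?i' ?j' = 1"
      using parity unfolding kk_cost_def
      by (auto intro!: bipartite_dist_other_side simp: kk_class_mod_2)
    then show ?thesis using edges by simp
  qed
  then show "let a = [0..<n] ! i; b = [0..<n] ! ?i'; x = [0..<n] ! j; y = [0..<n] ! ?j'
             in kk_cost k a b + kk_cost k x y \<le> kk_cost k a x + kk_cost k b y"
    using ij n by simp
qed simp_all

lemma tour_length_kk_upt:
  assumes "n = 2 * k * k"
  shows "tour_length n (kk_cost k) [0..<n] = real n"
proof -
  have "even n" "0 < n \<or> n = 0" using assms by auto
  then have "tour_length n (kk_cost k) [0..<n] = (\<Sum>i<n. 1)"
    unfolding tour_length_def by (intro sum.cong) (auto simp: kk_cost_Suc_mod)
  then show ?thesis by simp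
qed

text \<open>The \<open>r\<close>-th city (\<open>r < k\<close>) on vertex \<open>u\<close> of \<open>K\<^sub>k\<^sub>,\<^sub>k\<close>.\<close>

definition kk_member :: "nat \<Rightarrow> nat \<Rightarrow> nat \<Rightarrow> nat" where
  "kk_member k u r = (if even u then 2 * (r * k + u div 2)
                      else 2 * (r * k + (u div 2 + k - r) mod k) + 1)"

lemma kk_member:
  assumes "u < 2 * k" "r < k"
  shows "kk_member k u r < 2 * k * k" "kk_class k (kk_member k u r) = u"
    "kk_member k u r div 2 div k = r"
proof -
  have bound: "r * k + w < k * k" if "w < k" for w
  proof -
    have "(r + 1) * k \<le> k * k" using assms(2) by (intro mult_le_mono1) simp
    then show ?thesis using that by (simp add: algebra_simps)
  qed
  have digits: "(r * k + w) div k = r" "(r * k + w) mod k = w" if "w < k" for w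
    using that by simp_all
  have "kk_member k u r < 2 * k * k \<and> kk_class k (kk_member k u r) = u \<and>
        kk_member k u r div 2 div k = r"
  proof (cases "even u")
    case True
    define w where "w = u div 2"
    have w: "w < k" and u: "u = 2 * w" using assms(1) True unfolding w_def by auto
    have m: "kk_member k u r = 2 * (r * k + w)" using True unfolding kk_member_def w_def by simp
    show ?thesis unfolding m kk_class_double using bound[OF w] digits[OF w] u by simp
  next
    case False
    define w where "w = (u div 2 + k - r) mod k"
    have w: "w < k" using assms(2) unfolding w_def by simp
    have "(r + w) mod k = (u div 2 + k) mod k"
      unfolding w_def using assms(2) by (simp add: mod_add_right_eq)
    also have "\<dots> = u div 2" using assms(1) by simp
    finally have "(r + w) mod k = u div 2" .
    have m: "kk_member k u r = Suc (2 * (r * k + w))"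
      using False unfolding kk_member_def w_def by simp
    show ?thesis
      unfolding m kk_class_double_Suc using \<open>(r + w) mod k = u div 2\<close> bound[OF w] digits[OF w] False
      by simp
  qed
  then show "kk_member k u r < 2 * k * k" "kk_class k (kk_member k u r) = u"
    "kk_member k u r div 2 div k = r" by simp_all
qed

definition kk_grouped_tour :: "nat \<Rightarrow> nat list" where
  "kk_grouped_tour k = map (\<lambda>m. kk_member k (m div k) (m mod k)) [0..<2 * k * k]"

lemma is_tour_kk_grouped_tour:
  assumes "0 < k"
  shows "is_tour (2 * k * k) (kk_grouped_tour k)"
proof -
  let ?g = "\<lambda>m. kk_member k (m div k) (m mod k)" and ?N = "{0..<2 * k * k}"
  have member: "?g m < 2 * k * k" "kk_class k (?g m) = m div k" "?g m div 2 div k = m mod k"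
    if "m \<in> ?N" for m
    using kk_member[of "m div k" k "m mod k"] assms that by (simp_all add: less_mult_imp_div_less)
  have inj: "inj_on ?g ?N"
  proof (rule inj_onI)
    fix m m' assume m: "m \<in> ?N" "m' \<in> ?N" and eq: "?g m = ?g m'"
    have "m div k = m' div k" using member(2)[OF m(1)] member(2)[OF m(2)] eq by metis
    moreover have "m mod k = m' mod k" using member(3)[OF m(1)] member(3)[OF m(2)] eq by metis
    ultimately show "m = m'" by (metis div_mult_mod_eq)
  qed
  have sub: "?g ` ?N \<subseteq> ?N" using member by auto
  have "?g ` ?N = ?N"
    using card_subset_eq[OF _ sub] card_image[OF inj] by simp
  then show ?thesis
    using inj unfolding is_tour_def kk_grouped_tour_def by (simp add: distinct_map)
qed

lemma sum_dvd_Suc_indicator: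
  assumes "0 < k"
  shows "(\<Sum>m<N * k. if k dvd Suc m then 1 else 0 :: real) = real N"
proof -
  have block: "(\<Sum>m\<in>{u * k..<u * k + k}. if k dvd Suc m then 1 else 0 :: real) = 1" for u
  proof -
    have "k dvd Suc m \<longleftrightarrow> m = u * k + k - 1" if "m \<in> {u * k..<u * k + k}" for m
    proof -
      define j where "j = m - u * k"
      have j: "m = u * k + j" "j < k" using that unfolding j_def by auto
      then have "k dvd Suc m \<longleftrightarrow> k dvd Suc j"
        by (metis add_Suc_right add.commute dvd_add_times_triv_right_iff)
      also have "\<dots> \<longleftrightarrow> Suc j = k"
        using j(2) dvd_imp_le[of k "Suc j"] by auto
      finally show ?thesis using j by auto
    qed
    then have "(\<Sum>m\<in>{u * k..<u * k + k}. if k dvd Suc m then 1 else 0 :: real) =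
               (\<Sum>m\<in>{u * k..<u * k + k}. if m = u * k + k - 1 then 1 else 0)"
      by (intro sum.cong) auto
    also have "\<dots> = 1" using assms by simp
    finally show ?thesis .
  qed
  show ?thesis
    using sum.nat_group[of "\<lambda>m. if k dvd Suc m then 1 else 0 :: real" k N] by (simp add: block)
qed

lemma tour_length_kk_grouped_tour:
  assumes "0 < k" "n = 2 * k * k"
  shows "tour_length n (kk_cost k) (kk_grouped_tour k) = 2 * real k"
proof -
  have step: "kk_cost k (kk_grouped_tour k ! m) (kk_grouped_tour k ! (Suc m mod n)) =
                (if k dvd Suc m then 1 else 0)" if "m < n" for m
  proof -
    have "Suc m mod n < n" using that by simp
    then have "kk_cost k (kk_grouped_tour k ! m) (kk_grouped_tour k ! (Suc m mod n)) =
                 bipartite_dist (m div k) (Suc m mod n div k)"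
      using kk_member(2) that assms
      by (simp add: kk_grouped_tour_def kk_cost_def less_mult_imp_div_less mult.commute)
    also have "Suc m mod n div k = Suc m div k mod (2 * k)"
      using assms by (simp add: mod_mult2_eq mult.commute)
    finally have cost: "kk_cost k (kk_grouped_tour k ! m) (kk_grouped_tour k ! (Suc m mod n)) =
                         bipartite_dist (m div k) (Suc m div k mod (2 * k))" .
    have block: "m div k < 2 * k" using that assms by (simp add: less_mult_imp_div_less)
    show ?thesis
    proof (cases "k dvd Suc m")
      case True
      then have "Suc m div k = Suc (m div k)"
        using assms(1) by (simp add: div_Suc mod_Suc dvd_eq_mod_eq_0 split: if_splits)
      moreover have "Suc (m div k) mod (2 * k) mod 2 \<noteq> m div k mod 2"
        using Suc_mod_even_parity[OF _ block] by simp
      ultimately show ?thesis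
        using True cost bipartite_dist_other_side by (metis (no_types))
    next
      case False
      then have "Suc m div k = m div k"
        by (simp add: div_Suc mod_Suc dvd_eq_mod_eq_0 split: if_splits)
      then show ?thesis
        using False cost block by (simp add: bipartite_dist_def)
    qed
  qed
  have "tour_length n (kk_cost k) (kk_grouped_tour k) = (\<Sum>m<n. if k dvd Suc m then 1 else 0)"
    unfolding tour_length_def by (intro sum.cong) (auto simp: step)
  also have "\<dots> = real (2 * k)"
    using sum_dvd_Suc_indicator[OF assms(1), of "2 * k"] assms(2) by simp
  finally show ?thesis by simp
qed

lemma shortest_tour_exists: "\<exists>T. shortest_tour n c T"
proof -
  let ?S = "{T. is_tour n T}" and ?len = "tour_length n c"
  have "?S \<subseteq> {xs. set xs \<subseteq> {0..<n} \<and> length xs = n}"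
    by (simp add: is_tour_def subset_iff)
  then have fin: "finite ?S"
    by (rule finite_subset[OF _ finite_lists_length_eq[OF finite_atLeastLessThan]])
  have "[0..<n] \<in> ?S" unfolding is_tour_def by simp
  then have ne: "?S \<noteq> {}" by blast
  define T where "T = arg_min_on ?len ?S"
  have "T \<in> ?S" "\<not> (\<exists>T'\<in>?S. ?len T' < ?len T)"
    unfolding T_def by (rule arg_min_if_finite[OF fin ne])+
  then have "shortest_tour n c T" unfolding shortest_tour_def by (meson mem_Collect_eq not_less)
  then show ?thesis ..
qed

lemma tour_length_kk_shortest:
  assumes "0 < k" "n = 2 * k * k" "shortest_tour n (kk_cost k) T"
  shows "tour_length n (kk_cost k) T = 2 * real k"
proof -
  have "is_tour n (kk_grouped_tour k)"
    using is_tour_kk_grouped_tour[OF assms(1)] assms(2) by simp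
  then have "tour_length n (kk_cost k) T \<le> tour_length n (kk_cost k) (kk_grouped_tour k)"
    using assms(3) unfolding shortest_tour_def by blast
  also have "\<dots> = 2 * real k" by (rule tour_length_kk_grouped_tour[OF assms(1,2)])
  finally have upper: "tour_length n (kk_cost k) T \<le> 2 * real k" .
  have "is_tour n T" using assms(3) unfolding shortest_tour_def by blast
  from two_optimal_tour_length_le[OF metric_tsp_kk_cost two_optimal_kk_upt[OF assms(2)] this]
  have "real (2 * k * k) \<le> real k * tour_length n (kk_cost k) T"
    using assms(2) by (simp add: tour_length_kk_upt)
  then have "2 * real k \<le> tour_length n (kk_cost k) T"
    using assms(1) by (simp add: mult.commute mult_le_cancel_left_pos)
  with upper show ?thesis by linarith
qed

theorem theorem1:
  shows "(\<forall>(n::nat) c T' Tstar. n \<ge> 3 \<and> metric_tsp n c \<and> two_optimal n c T' \<and>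
            shortest_tour n c Tstar \<longrightarrow>
            tour_length n c T' \<le> sqrt (real n / 2) * tour_length n c Tstar)
       \<and> (\<forall>k::nat. k \<ge> 1 \<longrightarrow>
            (let n = 2 * k^2 in
             \<exists>c T' Tstar. metric_tsp n c \<and> two_optimal n c T' \<and> shortest_tour n c Tstar \<and>
               tour_length n c T' = sqrt (real n / 2) * tour_length n c Tstar \<and>
               tour_length n c Tstar > 0))"
proof (intro conjI allI impI)
  fix n :: nat and c T' Tstar
  assume "3 \<le> n \<and> metric_tsp n c \<and> two_optimal n c T' \<and> shortest_tour n c Tstar"
  then show "tour_length n c T' \<le> sqrt (real n / 2) * tour_length n c Tstar"
    using two_optimal_tour_length_le unfolding shortest_tour_def by blast
next
  fix k :: nat
  assume "1 \<le> k"
  define n where "n = 2 * k^2"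
  have n: "n = 2 * k * k" unfolding n_def by (simp add: power2_eq_square)
  obtain Tstar where Tstar: "shortest_tour n (kk_cost k) Tstar"
    using shortest_tour_exists by blast
  have len: "tour_length n (kk_cost k) Tstar = 2 * real k"
    using tour_length_kk_shortest[OF _ n Tstar] \<open>1 \<le> k\<close> by simp
  then have pos: "tour_length n (kk_cost k) Tstar > 0" using \<open>1 \<le> k\<close> by simp
  have "sqrt (real n / 2) = real k" "real n = real k * (2 * real k)" using n by simp_all
  then have eq: "tour_length n (kk_cost k) [0..<n] = sqrt (real n / 2) * tour_length n (kk_cost k) Tstar"
    unfolding len tour_length_kk_upt[OF n] by simp
  show "let n = 2 * k^2 in
          \<exists>c T' Tstar. metric_tsp n c \<and> two_optimal n c T' \<and> shortest_tour n c Tstar \<and>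
            tour_length n c T' = sqrt (real n / 2) * tour_length n c Tstar \<and>
            tour_length n c Tstar > 0"
    unfolding Let_def n_def[symmetric]
    using metric_tsp_kk_cost two_optimal_kk_upt[OF n] Tstar eq pos by blast
qed

end
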